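(* Let $(X,\mathcal{B},\mu)$ and $(Y,\mathcal{F},\nu)$ be measure spaces with non-trivial $\sigma$-finite measures $\mu,\nu$, and let $T\subset \mathbb{R}_+=[0,\infty)$. Let $f:X\times T\to\mathbb{R}$ and $u:Y\times T\to\mathbb{R}$ be functions such that for every $t\in T$ the functions $f(\cdot,t)$ and $u(\cdot,t)$ are measurable, and (for instance) $u=Q[f]$ for some (not necessarily linear) operator $Q$. For $t\in T$ write $$\|f\|_q(t)=\Big(\int_X |f(x,t)|^q\,\mu(dx)\Big)^{1/q},\qquad \|u\|_p(t)=\Big(\int_Y |u(y,t)|^p\,\nu(dy)\Big)^{1/p}.$$ Let $1\le a<b\le\infty$ and $1\le c<d\le\infty$, and suppose there is a constant $C=C(a,b,c,d)\ge 0$ such that $$\|u\|_p(t)\le C\, t^{1/p-1/q}\,\|f\|_q(t)\qquad\text{for all } t\in T,\ q\in(a,b),\ p\in(c,d).$$ Let $\psi\in G\Psi(a,b)$ and $\chi\in G\Psi(c,d)$, and suppose that for every $t\in T$, $\|f(\cdot,t)\|_{G\psi}<\infty$ (Grand Lebesgue norm over $(X,\mu)$) and $\|u(\cdot,t)\|_{G\chi}<\infty$ (Grand Lebesgue norm over $(Y,\nu)$). Then for every $t\in T$, $$\phi[G\psi](t)\cdot \|u(\cdot,t)\|_{G\chi}\le C(a,b,c,d)\,\phi[G\chi](t)\cdot\|f(\cdot,t)\|_{G\psi},$$ equivalently (when the fundamental functions are positive and finite) $$\frac{\|u(\cdot,t)\|_{G\chi}}{\phi[G\chi](t)}\le C(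a,b,c,d)\,\frac{\|f(\cdot,t)\|_{G\psi}}{\phi[G\psi](t)}.$$
   Context: For $1\le a<b\le\infty$, $G\Psi(a,b)$ denotes the set of strictly positive measurable functions $\psi:(a,b)\to(0,\infty)$ (not necessarily finite at the endpoints) with $\inf_{p\in(a,b)}\psi(p)>0$; $(a,b)$ is called the domain $\mathrm{Dom}(\psi)$. For a measure space $(\Omega,\mu)$ and $\psi\in G\Psi(a,b)$, the Grand Lebesgue Space $G\psi$ consists of measurable $g:\Omega\to\mathbb{R}$ with finite norm $\|g\|_{G\psi}=\sup_{p\in(a,b)}\|g\|_p/\psi(p)$, where $\|g\|_p=(\int_\Omega|g|^p\,d\mu)^{1/p}$. The fundamental function of $G\psi$ is $\phi[G\psi](\delta)=\sup_{p\in\mathrm{Dom}(\psi)}\delta^{1/p}/\psi(p)$ for $\delta\ge0$. (The paper denotes the generating function on $(c,d)$ by $\nu$, the same letter as the measure on $Y$; here it is renamed $\chi$.) *)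

theory Defs
  imports "HOL-Analysis.Analysis" "HOL-Probability.Probability"
begin

definition gdom :: "real \<Rightarrow> ereal \<Rightarrow> real set" where
  "gdom a b = {p. ereal a < ereal p \<and> ereal p < b}"

definition GPsi :: "real \<Rightarrow> ereal \<Rightarrow> (real \<Rightarrow> real) \<Rightarrow> bool" where
  "GPsi a b \<psi> \<longleftrightarrow>
     \<psi> \<in> borel_measurable (restrict_space borel (gdom a b)) \<and>
     (\<forall>p\<in>gdom a b. 0 < \<psi> p) \<and>
     (INF p\<in>gdom a b. \<psi> p) > 0"

definition lp_norm :: "'a measure \<Rightarrow> ('a \<Rightarrow> real) \<Rightarrow> real \<Rightarrow> ennreal" where
  "lp_norm M g p =
     (let I = (\<integral>\<^sup>+ x. ennreal (\<bar>g x\<bar> powr p) \<partial>M)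
      in if I = \<infinity> then \<infinity> else ennreal (enn2real I powr (1 / p)))"

definition gls_norm :: "'a measure \<Rightarrow> real \<Rightarrow> ereal \<Rightarrow> (real \<Rightarrow> real) \<Rightarrow> ('a \<Rightarrow> real) \<Rightarrow> ennreal" where
  "gls_norm M a b \<psi> g = (SUP p\<in>gdom a b. lp_norm M g p / ennreal (\<psi> p))"

definition fund_fun :: "real \<Rightarrow> ereal \<Rightarrow> (real \<Rightarrow> real) \<Rightarrow> real \<Rightarrow> ennreal" where
  "fund_fun a b \<psi> \<delta> = (SUP p\<in>gdom a b. ennreal (\<delta> powr (1 / p) / \<psi> p))"

end

theory Submission
  imports Defs
begin

text \<open>For fixed \<open>t > 0\<close> and exponents \<open>q, p\<close>, the factor \<open>t powr (1/p - 1/q)\<close> of the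
  hypothesis splits as \<open>t powr (1/p) / t powr (1/q)\<close>; moving \<open>t powr (1/q)\<close> to the left
  and \<open>t powr (1/p)\<close> to the right turns the bound into a comparison of one term of the
  supremum defining \<open>\<phi>[G\<psi>](t) * \<parallel>u\<parallel>\<^sub>G\<^sub>\<chi>\<close> with one term of the supremum defining
  \<open>\<phi>[G\<chi>](t) * \<parallel>f\<parallel>\<^sub>G\<^sub>\<psi>\<close>. Taking suprema over \<open>q\<close> and \<open>p\<close> gives the claim; at \<open>t = 0\<close>
  the left-hand side vanishes.\<close>

lemma SUP_mult_SUP_le_ennreal:
  fixes f g :: "'i \<Rightarrow> ennreal"
  assumes "\<And>i j. i \<in> I \<Longrightarrow> j \<in> J \<Longrightarrow> f i * g j \<le> z"
  shows "(SUP i\<in>I. f i) * (SUP j\<in>J. g j) \<le> z"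
proof -
  have "(SUP i\<in>I. f i) * (SUP j\<in>J. g j) = (SUP i\<in>I. SUP j\<in>J. f i * g j)"
    by (subst SUP_mult_right_ennreal, subst SUP_mult_left_ennreal) (rule refl)
  also have "\<dots> \<le> z"
    using assms by (intro SUP_least) auto
  finally show ?thesis .
qed

lemma fund_fun_zero [simp]: "fund_fun a b \<psi> 0 = 0"
  by (cases "gdom a b = {}") (simp_all add: fund_fun_def bot_ennreal)

lemma ennreal_divide_eq_mult_inverse:
  "y > 0 \<Longrightarrow> U / ennreal y = U * ennreal (1 / y)"
  by (simp add: divide_ennreal_def inverse_ennreal inverse_eq_divide)

lemma powr_weighted_bound_swap:
  fixes U F :: ennreal and t p q x y C :: real
  assumes "t > 0" and "x > 0" and "y > 0" and "C \<ge> 0"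
    and U_le: "U \<le> ennreal C * ennreal (t powr (1 / p - 1 / q)) * F"
  shows "ennreal (t powr (1 / q) / x) * (U / ennreal y)
           \<le> ennreal C * ennreal (t powr (1 / p) / y) * (F / ennreal x)"
proof -
  have powr_factors: "ennreal (t powr (1 / q) / x) * ennreal (t powr (1 / p - 1 / q)) * ennreal (1 / y)
      = ennreal (t powr (1 / p) / y) * ennreal (1 / x)"
  proof -
    have "t powr (1 / q) / x * t powr (1 / p - 1 / q) * (1 / y) = t powr (1 / p) / y * (1 / x)"
      using \<open>t > 0\<close> by (simp add: powr_diff field_simps)
    then show ?thesis
      using assms(2,3) by (simp add: ennreal_mult' [symmetric] ennreal_mult [symmetric])
  qed
  have "ennreal (t powr (1 / q) / x) * (U / ennreal y)
      = ennreal (t powr (1 / q) / x) * U * ennreal (1 / y)"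
    using \<open>y > 0\<close> by (simp add: ennreal_divide_eq_mult_inverse mult.assoc)
  also have "\<dots> \<le> ennreal (t powr (1 / q) / x) * (ennreal C * ennreal (t powr (1 / p - 1 / q)) * F)
      * ennreal (1 / y)"
    by (intro mult_right_mono mult_left_mono U_le) auto
  also have "\<dots> = ennreal C
      * (ennreal (t powr (1 / q) / x) * ennreal (t powr (1 / p - 1 / q)) * ennreal (1 / y)) * F"
    by (simp add: ac_simps)
  also have "\<dots> = ennreal C * (ennreal (t powr (1 / p) / y) * ennreal (1 / x)) * F"
    by (simp only: powr_factors)
  also have "\<dots> = ennreal C * ennreal (t powr (1 / p) / y) * (F / ennreal x)"
    using \<open>x > 0\<close> by (simp add: ennreal_divide_eq_mult_inverse ac_simps)
  finally show ?thesis .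
qed

lemma fund_fun_mult_gls_norm_le:
  fixes M :: "'x measure" and N :: "'y measure" and h :: "'x \<Rightarrow> real" and g :: "'y \<Rightarrow> real"
  assumes "t > 0" and "C \<ge> 0"
    and \<psi>_pos: "\<And>q. q \<in> gdom a b \<Longrightarrow> \<psi> q > 0"
    and chi_pos: "\<And>p. p \<in> gdom c d \<Longrightarrow> chi p > 0"
    and bound: "\<And>q p. q \<in> gdom a b \<Longrightarrow> p \<in> gdom c d \<Longrightarrow>
        lp_norm N g p \<le> ennreal C * ennreal (t powr (1 / p - 1 / q)) * lp_norm M h q"
  shows "fund_fun a b \<psi> t * gls_norm N c d chi g \<le> ennreal C * fund_fun c d chi t * gls_norm M a b \<psi> h"
  unfolding fund_fun_def gls_norm_def
proof (rule SUP_mult_SUP_le_ennreal)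
  fix q p assume q: "q \<in> gdom a b" and p: "p \<in> gdom c d"
  have "ennreal (t powr (1 / q) / \<psi> q) * (lp_norm N g p / ennreal (chi p))
      \<le> ennreal C * ennreal (t powr (1 / p) / chi p) * (lp_norm M h q / ennreal (\<psi> q))"
    by (rule powr_weighted_bound_swap[OF \<open>t > 0\<close> \<psi>_pos[OF q] chi_pos[OF p] \<open>C \<ge> 0\<close> bound[OF q p]])
  also have "\<dots> \<le> ennreal C * (SUP p\<in>gdom c d. ennreal (t powr (1 / p) / chi p))
      * (SUP q\<in>gdom a b. lp_norm M h q / ennreal (\<psi> q))"
    using p q by (intro mult_mono SUP_upper) auto
  finally show "ennreal (t powr (1 / q) / \<psi> q) * (lp_norm N g p / ennreal (chi p))
      \<le> ennreal C * (SUP p\<in>gdom c d. ennreal (t powr (1 / p) / chi p))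
        * (SUP q\<in>gdom a b. lp_norm M h q / ennreal (\<psi> q))" .
qed

theorem proposition2p1:
  fixes M :: "'x measure" and N :: "'y measure"
    and T :: "real set"
    and f :: "'x \<Rightarrow> real \<Rightarrow> real" and u :: "'y \<Rightarrow> real \<Rightarrow> real"
    and a c :: real and b d :: ereal and C :: real
    and \<psi> chi :: "real \<Rightarrow> real"
  assumes "sigma_finite_measure M" and "sigma_finite_measure N"
    and "emeasure M (space M) > 0" and "emeasure N (space N) > 0"
    and "T \<subseteq> {0..}"
    and "\<And>t. t \<in> T \<Longrightarrow> (\<lambda>x. f x t) \<in> borel_measurable M"
    and "\<And>t. t \<in> T \<Longrightarrow> (\<lambda>y. u y t) \<in> borel_measurable N"
    and "1 \<le> a" and "ereal a < b" and "1 \<le> c" and "ereal c < d"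
    and "C \<ge> 0"
    and bound: "\<And>t q p. t \<in> T \<Longrightarrow> q \<in> gdom a b \<Longrightarrow> p \<in> gdom c d \<Longrightarrow>
        lp_norm N (\<lambda>y. u y t) p
          \<le> ennreal C * ennreal (t powr (1 / p - 1 / q)) * lp_norm M (\<lambda>x. f x t) q"
    and "GPsi a b \<psi>" and "GPsi c d chi"
    and "\<And>t. t \<in> T \<Longrightarrow> gls_norm M a b \<psi> (\<lambda>x. f x t) < \<infinity>"
    and "\<And>t. t \<in> T \<Longrightarrow> gls_norm N c d chi (\<lambda>y. u y t) < \<infinity>"
  shows "\<forall>t\<in>T. fund_fun a b \<psi> t * gls_norm N c d chi (\<lambda>y. u y t)
            \<le> ennreal C * fund_fun c d chi t * gls_norm M a b \<psi> (\<lambda>x. f x t)"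
proof
  fix t assume "t \<in> T"
  with \<open>T \<subseteq> {0..}\<close> consider "t = 0" | "t > 0" by force
  then show "fund_fun a b \<psi> t * gls_norm N c d chi (\<lambda>y. u y t)
      \<le> ennreal C * fund_fun c d chi t * gls_norm M a b \<psi> (\<lambda>x. f x t)"
  proof cases
    case 2
    show ?thesis
    proof (rule fund_fun_mult_gls_norm_le)
      show "\<And>q. q \<in> gdom a b \<Longrightarrow> \<psi> q > 0" using \<open>GPsi a b \<psi>\<close> by (simp add: GPsi_def)
      show "\<And>p. p \<in> gdom c d \<Longrightarrow> chi p > 0" using \<open>GPsi c d chi\<close> by (simp add: GPsi_def)
    qed (use 2 \<open>C \<ge> 0\<close> bound[OF \<open>t \<in> T\<close>] in auto)
  qed simp
qed

end
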